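(* Let $G=(B\cup W,E)$ be a bipartite graph (an instance of Bipartite Influence), and let $B_0\subseteq B$ and $W_0\subseteq W$. Then $Ls(G)\leq Ls(G\setminus W_0)+|W_0|$, $Rs(G)\geq Rs(G\setminus B_0)-|B_0|$, $Ls(G)\geq Ls(G\setminus B_0)-|B_0|$, and $Rs(G)\leq Rs(G\setminus W_0)+|W_0|$.
   Context: Bipartite Influence is a two-player game (Left and Right) played on a bipartite graph $G=(B\cup W,E)$ whose vertices in $B$ are black and in $W$ white, every edge joining $B$ and $W$. Isolated vertices are credited to the owner of their colour (black to Left, white to Right) and removed. On her turn Left chooses a black vertex $x$ and removes $Rmv(G,x)$, consisting of $x$, its neighbours, and the vertices that become isolated after removing these; Right does the same with a white vertex. The score is (number of vertices credited to/removed by Left) minus (number credited to/removed by Right). Formally, if $G$ has no edges its value is $|B|-|W|$; otherwise $Ls(G)=\max_{x\in B\text{ non-isolated}}\{|Rmv(G,x)|+Rs(G\setminus Rmv(G,x))\}$ and $Rs(G)=\min_{y\in W\text{ non-isolated}}\{-|Rmv(G,y)|+Ls(G\setminus Rmv(G,y))\}$, where isolated vertices of $G$ contribute $|I_B|-|I_W|$ (black minus white isolated vertices) to both scores. $Ls$ (resp. $Rs$) is the optimal final score when Left (resp. Right) moves first. $G\setminus X$ denotes the subgraph induced on the remaining vertices. *)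

theory Defs
  imports Main
begin

definition bipartite :: "'a set \<Rightarrow> 'a set \<Rightarrow> ('a \<times> 'a) set \<Rightarrow> bool" where
  "bipartite B W E \<longleftrightarrow> finite B \<and> finite W \<and> B \<inter> W = {} \<and> E \<subseteq> B \<times> W"

definition nbrs :: "('a \<times> 'a) set \<Rightarrow> 'a \<Rightarrow> 'a set" where
  "nbrs E v = {u. (v, u) \<in> E \<or> (u, v) \<in> E}"

definition isol :: "'a set \<Rightarrow> 'a set \<Rightarrow> ('a \<times> 'a) set \<Rightarrow> 'a set" where
  "isol B W E = {v \<in> B \<union> W. nbrs E v = {}}"

definition del :: "'a set \<Rightarrow> 'a set \<Rightarrow> ('a \<times> 'a) set \<Rightarrow> 'a set
    \<Rightarrow> 'a set \<times> 'a set \<times> ('a \<times> 'a) set" where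
  "del B W E X = (B - X, W - X, E \<inter> ((B - X) \<times> (W - X)))"

definition Rmv :: "'a set \<Rightarrow> 'a set \<Rightarrow> ('a \<times> 'a) set \<Rightarrow> 'a \<Rightarrow> 'a set" where
  "Rmv B W E x =
     (let N = ({x} \<union> nbrs E x) \<inter> (B \<union> W) in
      case del B W E N of (B1, W1, E1) \<Rightarrow> N \<union> isol B1 W1 E1)"

lemma Rmv_contains: "x \<in> B \<union> W \<Longrightarrow> x \<in> Rmv B W E x"
  by (auto simp: Rmv_def Let_def split: prod.splits)

lemma Rmv_sub: "Rmv B W E x \<subseteq> B \<union> W"
  by (auto simp: Rmv_def Let_def del_def isol_def split: prod.splits)

text \<open>score True G = Ls(G) (Left moves first), score False G = Rs(G) (Right moves
  first).\<close>
function score :: "bool \<Rightarrow> 'a set \<Rightarrow> 'a set \<Rightarrow> ('a \<times> 'a) set \<Rightarrow> int" where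
  "score L B W E =
    (if \<not> finite (B \<union> W) then 0
     else if E = {} then int (card B) - int (card W)
     else
       (let I = isol B W E; B' = B - I; W' = W - I; E' = E \<inter> (B' \<times> W') in
        int (card (I \<inter> B)) - int (card (I \<inter> W)) +
        (if L then
           Max ((\<lambda>x. int (card (Rmv B' W' E' x)) +
                  score False (B' - Rmv B' W' E' x) (W' - Rmv B' W' E' x)
                    (E' \<inter> ((B' - Rmv B' W' E' x) \<times> (W' - Rmv B' W' E' x)))) ` B')
         else
           Min ((\<lambda>y. - int (card (Rmv B' W' E' y)) +
                  score True (B' - Rmv B' W' E' y) (W' - Rmv B' W' E' y)
                    (E' \<inter> ((B' - Rmv B' W' E' y) \<times> (W' - Rmv B' W' E' y)))) ` W'))))"
  by pat_completeness auto
termination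
proof (relation "measure (\<lambda>(L, B, W, E). card (B \<union> W))")
  show "wf (measure (\<lambda>(L, B, W, E). card (B \<union> W)))" by simp
next
  fix L :: bool and B W :: "'a set" and E :: "('a \<times> 'a) set" and I B' W' E' x
  assume fin: "\<not> \<not> finite (B \<union> W)" and "E \<noteq> {}" and I: "I = isol B W E"
    and B': "B' = B - I" and W': "W' = W - I" and "E' = E \<inter> (B' \<times> W')" and L and x: "x \<in> B'"
  let ?R = "Rmv B' W' E' x"
  have "x \<in> ?R" using x by (intro Rmv_contains) auto
  hence "(B' - ?R) \<union> (W' - ?R) \<subset> B \<union> W" using x B' W' by blast
  thus "((False, B' - ?R, W' - ?R, E' \<inter> ((B' - ?R) \<times> (W' - ?R))), L, B, W, E)
        \<in> measure (\<lambda>(L, B, W, E). card (B \<union> W))"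
    using fin by (simp add: psubset_card_mono)
next
  fix L :: bool and B W :: "'a set" and E :: "('a \<times> 'a) set" and I B' W' E' x
  assume fin: "\<not> \<not> finite (B \<union> W)" and "E \<noteq> {}" and I: "I = isol B W E"
    and B': "B' = B - I" and W': "W' = W - I" and "E' = E \<inter> (B' \<times> W')" and "\<not> L" and x: "x \<in> W'"
  let ?R = "Rmv B' W' E' x"
  have "x \<in> ?R" using x by (intro Rmv_contains) auto
  hence "(B' - ?R) \<union> (W' - ?R) \<subset> B \<union> W" using x B' W' by blast
  thus "((True, B' - ?R, W' - ?R, E' \<inter> ((B' - ?R) \<times> (W' - ?R))), L, B, W, E)
        \<in> measure (\<lambda>(L, B, W, E). card (B \<union> W))"
    using fin by (simp add: psubset_card_mono)
qed

definition Ls :: "'a set \<Rightarrow> 'a set \<Rightarrow> ('a \<times> 'a) set \<Rightarrow> int" where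
  "Ls B W E = score True B W E"

definition Rs :: "'a set \<Rightarrow> 'a set \<Rightarrow> ('a \<times> 'a) set \<Rightarrow> int" where
  "Rs B W E = score False B W E"

end

theory Submission
  imports Defs
begin

(*
  Exchanging the colours negates all scores, so the black inequalities are the white ones for
  the colour-swapped graph, and it suffices to show that deleting a set W0 of white vertices
  lowers Ls and Rs by at most |W0|. This is proved for induced subgraphs V without isolated
  vertices, by induction on their size. The vertices isolated by deleting W0 from V are black
  and credited to Left, so the claim reads Ls(V) <= |V - V'| + Ls(V') for the non-isolated
  part V' of V - W0, and likewise for Rs.
  If Left's best first move x in V lies in V', then x played in V' leaves exactly the
  non-isolated part of (V after x) - W0, and the induction hypothesis for Right applies;
  otherwise x itself was isolated by the deletion, the move leaves V' unchanged, and
  Rs(V') <= Ls(V') closes the gap. If Right moves first, his best move y in V' is played in V;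
  what the deletion of W0 costs after y is part of what it costs in V.
  Finally, Rs <= Ls on graphs without isolated vertices follows from the black inequality for
  smaller graphs: Right's first move y is compared with Left deleting the black vertices that
  y removes, which leaves the white vertices removed by y isolated and credited to Right.
*)

section \<open>Vertex sets of a bipartite graph\<close>

definition nbrs_in :: "('a \<times> 'a) set \<Rightarrow> 'a set \<Rightarrow> 'a \<Rightarrow> 'a set" where
  "nbrs_in E V v = {u \<in> V. (v, u) \<in> E \<or> (u, v) \<in> E}"

definition isolated_in :: "('a \<times> 'a) set \<Rightarrow> 'a set \<Rightarrow> 'a set" where
  "isolated_in E V = {v \<in> V. nbrs_in E V v = {}}"

definition core :: "('a \<times> 'a) set \<Rightarrow> 'a set \<Rightarrow> 'a set" where
  "core E V = V - isolated_in E V"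

definition closed_nbhd :: "('a \<times> 'a) set \<Rightarrow> 'a set \<Rightarrow> 'a \<Rightarrow> 'a set" where
  "closed_nbhd E V x = insert x (nbrs_in E V x) \<inter> V"

definition after_move :: "('a \<times> 'a) set \<Rightarrow> 'a set \<Rightarrow> 'a \<Rightarrow> 'a set" where
  "after_move E V x = core E (V - closed_nbhd E V x)"

lemma isolated_in_subset: "isolated_in E V \<subseteq> V"
  by (auto simp: isolated_in_def)

lemma core_subset: "core E V \<subseteq> V"
  by (auto simp: core_def)

lemma after_move_subset: "after_move E V x \<subseteq> V - closed_nbhd E V x"
  by (simp add: after_move_def core_subset)

lemma self_notin_after_move: "x \<notin> after_move E V x"
  by (auto simp: after_move_def core_def closed_nbhd_def)

lemma card_after_move_less:
  assumes "finite V" and "x \<in> V"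
  shows "card (after_move E V x) < card V"
  using assms after_move_subset[of E V x] self_notin_after_move[of x E V]
  by (intro psubset_card_mono) auto

lemma isolated_in_Diff:
  assumes "J \<subseteq> isolated_in E V"
  shows "isolated_in E (V - J) = isolated_in E V - J"
proof -
  have "nbrs_in E V v \<inter> J = {}" if "v \<in> V" for v
    using assms that by (fastforce simp: isolated_in_def nbrs_in_def)
  then have "nbrs_in E (V - J) v = nbrs_in E V v" if "v \<in> V" for v
    using that by (auto simp: nbrs_in_def)
  then show ?thesis
    using assms by (auto simp: isolated_in_def)
qed

lemma core_Diff_isolated: "J \<subseteq> isolated_in E V \<Longrightarrow> core E (V - J) = core E V"
  using isolated_in_Diff[of J E V] by (auto simp: core_def)

lemma isolated_in_Diff_mono: "isolated_in E V - X \<subseteq> isolated_in E (V - X)"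
  by (auto simp: isolated_in_def nbrs_in_def)

lemma core_core_Diff: "core E (core E V - X) = core E (V - X)"
proof -
  have "core E V - X = (V - X) - (isolated_in E V - X)"
    by (auto simp: core_def)
  then show ?thesis
    using core_Diff_isolated[OF isolated_in_Diff_mono] by simp
qed

lemma isolated_in_core: "isolated_in E (core E V) = {}"
  unfolding core_def by (simp add: isolated_in_Diff)

lemma isolated_in_after_move: "isolated_in E (after_move E V x) = {}"
  by (simp add: after_move_def isolated_in_core)

lemma core_nonempty_if_edge: "E \<inter> (V \<times> V) \<noteq> {} \<Longrightarrow> core E V \<noteq> {}"
  by (fastforce simp: core_def isolated_in_def nbrs_in_def)

lemma after_move_in_core_Diff:
  assumes "x \<in> core E (V - X)"
  shows "after_move E (core E (V - X)) x = core E (after_move E V x - X)"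
proof -
  let ?C = "core E (V - X)"
  have "?C - closed_nbhd E ?C x = ?C - closed_nbhd E V x"
    using assms core_subset[of E "V - X"] by (auto simp: closed_nbhd_def nbrs_in_def)
  then have "after_move E ?C x = core E (V - X - closed_nbhd E V x)"
    by (simp add: after_move_def core_core_Diff)
  also have "V - X - closed_nbhd E V x = V - closed_nbhd E V x - X"
    by auto
  finally show ?thesis
    by (simp add: after_move_def core_core_Diff)
qed

lemma after_move_isolated_Diff:
  assumes "x \<in> isolated_in E (V - X)" and "x \<in> V"
  shows "core E (after_move E V x - X) = core E (V - X)"
proof -
  have "nbrs_in E V x \<subseteq> X"
    using assms(1) by (auto simp: isolated_in_def nbrs_in_def)
  then have "V - closed_nbhd E V x - X = (V - X) - {x}"
    using assms(2) by (auto simp: closed_nbhd_def)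
  then show ?thesis
    using assms(1) by (simp add: after_move_def core_core_Diff core_Diff_isolated)
qed

lemma nbrs_in_converse [simp]: "nbrs_in (E\<inverse>) V v = nbrs_in E V v"
  by (auto simp: nbrs_in_def)

lemma isolated_in_converse [simp]: "isolated_in (E\<inverse>) V = isolated_in E V"
  by (simp add: isolated_in_def)

lemma core_converse [simp]: "core (E\<inverse>) V = core E V"
  by (simp add: core_def)

lemma after_move_converse [simp]: "after_move (E\<inverse>) V x = after_move E V x"
  by (simp add: after_move_def closed_nbhd_def)

lemma bipartite_converse: "bipartite B W E \<Longrightarrow> bipartite W B (E\<inverse>)"
  by (auto simp: bipartite_def)

lemma finite_if_subset_vertices: "bipartite B W E \<Longrightarrow> V \<subseteq> B \<union> W \<Longrightarrow> finite V"
  by (auto simp: bipartite_def intro: finite_subset)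

lemma nbrs_in_white:
  "bipartite B W E \<Longrightarrow> v \<in> W \<Longrightarrow> nbrs_in E V v \<subseteq> B"
  by (auto simp: bipartite_def nbrs_in_def)

lemma nbrs_in_black:
  "bipartite B W E \<Longrightarrow> v \<in> B \<Longrightarrow> nbrs_in E V v \<subseteq> W"
  by (auto simp: bipartite_def nbrs_in_def)

lemma white_in_closed_nbhd_of_white:
  assumes "bipartite B W E" and "y \<in> W" and "z \<in> W" and "z \<in> closed_nbhd E V y"
  shows "z = y"
  using assms nbrs_in_white[OF assms(1,2), of V] by (auto simp: closed_nbhd_def bipartite_def)

lemma no_isolated_has_both_colours:
  assumes bip: "bipartite B W E" and "V \<subseteq> B \<union> W" and "isolated_in E V = {}" and "V \<noteq> {}"
  shows "E \<inter> (V \<times> V) \<noteq> {}" "B \<inter> V \<noteq> {}" "W \<inter> V \<noteq> {}"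
proof -
  obtain v where "v \<in> V"
    using assms(4) by blast
  moreover obtain u where "u \<in> nbrs_in E V v"
    using assms(3) \<open>v \<in> V\<close> by (auto simp: isolated_in_def)
  ultimately have "u \<in> V" "v \<in> V" "(v, u) \<in> E \<or> (u, v) \<in> E"
    by (auto simp: nbrs_in_def)
  with bip show "E \<inter> (V \<times> V) \<noteq> {}" "B \<inter> V \<noteq> {}" "W \<inter> V \<noteq> {}"
    by (auto simp: bipartite_def)
qed

lemma isolated_in_Diff_white:
  assumes bip: "bipartite B W E" and VS: "V \<subseteq> B \<union> W" and I: "isolated_in E V = {}"
    and W0: "W0 \<subseteq> W"
  shows "isolated_in E (V - W0) \<subseteq> B"
proof
  fix v
  assume v: "v \<in> isolated_in E (V - W0)"
  show "v \<in> B"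
  proof (rule ccontr)
    assume "v \<notin> B"
    then have "v \<in> W" and "v \<in> V"
      using v VS by (auto simp: isolated_in_def)
    then obtain u where u: "u \<in> nbrs_in E V v"
      using I by (auto simp: isolated_in_def)
    then have "u \<in> B"
      using nbrs_in_white[OF bip \<open>v \<in> W\<close>] by blast
    then have "u \<in> nbrs_in E (V - W0) v"
      using u W0 bip by (auto simp: nbrs_in_def bipartite_def)
    then show False
      using v by (auto simp: isolated_in_def)
  qed
qed

lemma nbrs_in_after_white_move:
  assumes bip: "bipartite B W E" and y: "y \<in> W" and z: "z \<in> B \<inter> after_move E V y"
  shows "nbrs_in E V z \<subseteq> after_move E V y"
proof
  let ?N = "closed_nbhd E V y"
  fix u
  assume u: "u \<in> nbrs_in E V z"
  have zN: "z \<in> V - ?N"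
    using z after_move_subset[of E V y] by blast
  have "u \<in> W"
    using nbrs_in_black[OF bip] z u by blast
  have "u \<notin> ?N"
  proof
    assume "u \<in> ?N"
    then have "u = y"
      using white_in_closed_nbhd_of_white[OF bip y \<open>u \<in> W\<close>] by blast
    then show False
      using u zN by (auto simp: nbrs_in_def closed_nbhd_def)
  qed
  then show "u \<in> after_move E V y"
    using u zN by (auto simp: after_move_def core_def isolated_in_def nbrs_in_def)
qed

lemma Diff_core_after_white_move:
  assumes bip: "bipartite B W E" and VS: "V \<subseteq> B \<union> W" and W0: "W0 \<subseteq> W"
    and y: "y \<in> W \<inter> V"
  shows "after_move E V y - core E (after_move E V y - W0) \<subseteq> V - core E (V - W0)"
proof
  let ?A = "after_move E V y"
  fix z
  assume z: "z \<in> ?A - core E (?A - W0)"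
  have AV: "?A \<subseteq> V"
    using after_move_subset[of E V y] by blast
  show "z \<in> V - core E (V - W0)"
  proof (cases "z \<in> W0")
    case True
    then show ?thesis
      using z AV by (auto simp: core_def isolated_in_def)
  next
    case False
    then have z_isolated: "z \<in> isolated_in E (?A - W0)"
      using z by (auto simp: core_def)
    have "?A \<subseteq> B \<union> W"
      using AV VS by blast
    then have "z \<in> B"
      using isolated_in_Diff_white[OF bip _ isolated_in_after_move W0] z_isolated by blast
    then have "nbrs_in E (V - W0) z \<subseteq> nbrs_in E (?A - W0) z"
      using nbrs_in_after_white_move[OF bip, of y z V] y z by (auto simp: nbrs_in_def)
    then have "z \<in> isolated_in E (V - W0)"
      using z_isolated z AV False by (auto simp: isolated_in_def)
    then show ?thesis
      using z AV by (auto simp: core_def)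
  qed
qed

lemma white_removed_by_white_move_isolated:
  assumes bip: "bipartite B W E" and y: "y \<in> W \<inter> V"
  shows "(V - after_move E V y) \<inter> W \<subseteq> isolated_in E (V - (V - after_move E V y) \<inter> B)"
proof
  let ?A = "after_move E V y"
  fix z
  assume z: "z \<in> (V - ?A) \<inter> W"
  have "v \<notin> nbrs_in E (V - (V - ?A) \<inter> B) z" for v
  proof
    assume v: "v \<in> nbrs_in E (V - (V - ?A) \<inter> B) z"
    then have "v \<in> B"
      using nbrs_in_white[OF bip] z by blast
    then have "v \<in> B \<inter> ?A"
      using v by (auto simp: nbrs_in_def)
    moreover have "z \<in> nbrs_in E V v"
      using v z by (auto simp: nbrs_in_def)
    ultimately have "z \<in> ?A"
      using nbrs_in_after_white_move[OF bip] y by blast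
    then show False
      using z by blast
  qed
  moreover have "z \<in> V - (V - ?A) \<inter> B"
    using z bip by (auto simp: bipartite_def)
  ultimately show "z \<in> isolated_in E (V - (V - ?A) \<inter> B)"
    by (auto simp: isolated_in_def)
qed

lemma card_Diff_add_card_Diff:
  assumes "finite V" and "C \<subseteq> A" and "A \<subseteq> V"
  shows "int (card (V - A)) + int (card (A - C)) = int (card (V - C))"
proof -
  have "V - C = (V - A) \<union> (A - C)"
    using assms(2,3) by blast
  moreover have "card ((V - A) \<union> (A - C)) = card (V - A) + card (A - C)"
    using assms by (intro card_Un_disjoint) (auto intro: finite_subset)
  ultimately show ?thesis
    by simp
qed

section \<open>The game on induced subgraphs\<close>

definition induced_score :: "'a set \<Rightarrow> 'a set \<Rightarrow> ('a \<times> 'a) set \<Rightarrow> bool \<Rightarrow> 'a set \<Rightarrow> int" where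
  "induced_score B W E L V = score L (B \<inter> V) (W \<inter> V) (E \<inter> (V \<times> V))"

definition move_value :: "'a set \<Rightarrow> 'a set \<Rightarrow> ('a \<times> 'a) set \<Rightarrow> bool \<Rightarrow> 'a set \<Rightarrow> 'a \<Rightarrow> int" where
  "move_value B W E L V x =
     (if L then int (card (V - after_move E V x)) else - int (card (V - after_move E V x)))
     + induced_score B W E (\<not> L) (after_move E V x)"

definition balance :: "'a set \<Rightarrow> 'a set \<Rightarrow> 'a set \<Rightarrow> int" where
  "balance B W J = int (card (B \<inter> J)) - int (card (W \<inter> J))"

lemma balance_split:
  assumes "finite V" and "J \<subseteq> V"
  shows "balance B W V = balance B W J + balance B W (V - J)"
proof -
  have "card (X \<inter> V) = card (X \<inter> J \<union> X \<inter> (V - J))" for X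
    using assms(2) by (intro arg_cong[where f = card]) auto
  also have "card (X \<inter> J \<union> X \<inter> (V - J)) = card (X \<inter> J) + card (X \<inter> (V - J))" for X
    using assms by (intro card_Un_disjoint) (auto intro: finite_subset)
  finally show ?thesis
    by (simp add: balance_def)
qed

lemma balance_black:
  assumes "J \<subseteq> B" and "B \<inter> W = {}"
  shows "balance B W J = int (card J)"
proof -
  have "B \<inter> J = J" and "W \<inter> J = {}"
    using assms by auto
  then show ?thesis
    by (simp add: balance_def)
qed

lemma balance_white:
  assumes "J \<subseteq> W" and "B \<inter> W = {}"
  shows "balance B W J = - int (card J)"
proof -
  have "B \<inter> J = {}" and "W \<inter> J = J"
    using assms by auto
  then show ?thesis
    by (simp add: balance_def)
qed

lemma balance_le_card: "finite J \<Longrightarrow> balance B W J \<le> int (card J)"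
  using card_mono[OF _ Int_lower2, of J B] by (simp add: balance_def)

lemma balance_swap: "balance W B J = - balance B W J"
  by (simp add: balance_def)

lemma isol_induced:
  "V \<subseteq> B \<union> W \<Longrightarrow> isol (B \<inter> V) (W \<inter> V) (E \<inter> (V \<times> V)) = isolated_in E V"
  by (auto simp: isol_def isolated_in_def nbrs_def nbrs_in_def)

lemma Rmv_induced:
  assumes "E \<subseteq> B \<times> W" and "V \<subseteq> B \<union> W" and "x \<in> V"
  shows "Rmv (B \<inter> V) (W \<inter> V) (E \<inter> (V \<times> V)) x = V - after_move E V x"
proof -
  let ?N = "closed_nbhd E V x"
  have N: "({x} \<union> nbrs (E \<inter> (V \<times> V)) x) \<inter> (B \<inter> V \<union> W \<inter> V) = ?N"
    using assms by (auto simp: nbrs_def closed_nbhd_def nbrs_in_def)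
  have D: "del (B \<inter> V) (W \<inter> V) (E \<inter> (V \<times> V)) ?N
      = (B \<inter> (V - ?N), W \<inter> (V - ?N), E \<inter> ((V - ?N) \<times> (V - ?N)))"
    using assms(1) by (auto simp: del_def)
  have "isol (B \<inter> (V - ?N)) (W \<inter> (V - ?N)) (E \<inter> ((V - ?N) \<times> (V - ?N))) = isolated_in E (V - ?N)"
    using assms(2) by (intro isol_induced) auto
  moreover have "?N \<subseteq> V"
    by (auto simp: closed_nbhd_def)
  ultimately show ?thesis
    unfolding Rmv_def Let_def N D by (auto simp: after_move_def core_def isolated_in_def)
qed

lemma move_value_eq_Rmv:
  assumes "E \<subseteq> B \<times> W" and "V \<subseteq> B \<union> W" and "x \<in> V"
  defines "R \<equiv> Rmv (B \<inter> V) (W \<inter> V) (E \<inter> (V \<times> V)) x"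
  shows "move_value B W E L V x = (if L then int (card R) else - int (card R))
    + score (\<not> L) (B \<inter> V - R) (W \<inter> V - R) (E \<inter> (V \<times> V) \<inter> ((B \<inter> V - R) \<times> (W \<inter> V - R)))"
proof -
  let ?A = "after_move E V x"
  have R: "R = V - ?A"
    unfolding R_def using assms(1-3) by (rule Rmv_induced)
  have AV: "?A \<subseteq> V"
    using after_move_subset[of E V x] by blast
  then have "B \<inter> V - R = B \<inter> ?A" and "W \<inter> V - R = W \<inter> ?A"
    using R by auto
  moreover have "E \<inter> (V \<times> V) \<inter> ((B \<inter> ?A) \<times> (W \<inter> ?A)) = E \<inter> (?A \<times> ?A)"
    using assms(1) AV by auto
  ultimately show ?thesis
    by (simp add: move_value_def induced_score_def R)
qed

lemma induced_score_unfold: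
  assumes bip: "bipartite B W E" and VS: "V \<subseteq> B \<union> W"
  shows "induced_score B W E L V =
    (if E \<inter> (V \<times> V) = {} then balance B W V
     else balance B W (isolated_in E V) +
       (if L then Max (move_value B W E True (core E V) ` (B \<inter> core E V))
        else Min (move_value B W E False (core E V) ` (W \<inter> core E V))))"
proof -
  have EBW: "E \<subseteq> B \<times> W" and fin: "finite (B \<inter> V \<union> W \<inter> V)"
    using bip by (auto simp: bipartite_def)
  define C where "C = core E V"
  have CV: "C \<subseteq> V" and CS: "C \<subseteq> B \<union> W"
    using core_subset[of E V] VS by (auto simp: C_def)
  have BC: "B \<inter> V - isolated_in E V = B \<inter> C" and WC: "W \<inter> V - isolated_in E V = W \<inter> C"
    by (auto simp: C_def core_def)
  have EC: "E \<inter> (V \<times> V) \<inter> ((B \<inter> C) \<times> (W \<inter> C)) = E \<inter> (C \<times> C)"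
    using EBW CV by auto
  have EV: "E \<inter> ((B \<inter> V) \<times> (W \<inter> V)) = E \<inter> (V \<times> V)"
    using EBW by auto
  have "isolated_in E V \<inter> (B \<inter> V) = B \<inter> isolated_in E V"
    and "isolated_in E V \<inter> (W \<inter> V) = W \<inter> isolated_in E V"
    using isolated_in_subset[of E V] by auto
  then have I: "int (card (isolated_in E V \<inter> (B \<inter> V))) - int (card (isolated_in E V \<inter> (W \<inter> V)))
      = balance B W (isolated_in E V)"
    by (simp add: balance_def)
  have "induced_score B W E L V =
    (if E \<inter> (V \<times> V) = {} then balance B W V
     else balance B W (isolated_in E V) +
       (if L then Max (move_value B W E True C ` (B \<inter> C))
        else Min (move_value B W E False C ` (W \<inter> C))))"
    unfolding induced_score_def[of B W E L V]
    apply (subst score.simps)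
    apply (simp only: Let_def EV isol_induced[OF VS] BC WC EC fin I if_True not_True_eq_False)
    apply (auto simp: balance_def move_value_eq_Rmv[OF EBW CS]
        intro!: arg_cong[where f = Max] arg_cong[where f = Min] image_cong)
    done
  then show ?thesis
    by (simp add: C_def)
qed

lemma score_del:
  assumes "bipartite B W E"
  shows "(case del B W E X of (B1, W1, E1) \<Rightarrow> score L B1 W1 E1) = induced_score B W E L (B \<union> W - X)"
proof -
  have "B \<inter> (B \<union> W - X) = B - X" and "W \<inter> (B \<union> W - X) = W - X"
    by auto
  moreover have "E \<inter> ((B \<union> W - X) \<times> (B \<union> W - X)) = E \<inter> ((B - X) \<times> (W - X))"
    using assms by (auto simp: bipartite_def)
  ultimately show ?thesis
    by (simp add: del_def induced_score_def)
qed

lemma score_eq_induced_score: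
  assumes "bipartite B W E"
  shows "score L B W E = induced_score B W E L (B \<union> W)"
  using score_del[OF assms, where X = "{}" and L = L] by (simp add: del_def Int_absorb2 assms[unfolded bipartite_def])

lemma induced_score_empty: "bipartite B W E \<Longrightarrow> induced_score B W E L {} = 0"
  by (simp add: induced_score_unfold balance_def)

lemma induced_score_Diff_isolated:
  assumes bip: "bipartite B W E" and VS: "V \<subseteq> B \<union> W" and J: "J \<subseteq> isolated_in E V"
  shows "induced_score B W E L V = balance B W J + induced_score B W E L (V - J)"
proof -
  have JV: "J \<subseteq> V"
    using J isolated_in_subset[of E V] by blast
  have fin: "finite V"
    using finite_if_subset_vertices[OF bip VS] .
  have "E \<inter> ((V - J) \<times> (V - J)) = E \<inter> (V \<times> V)"
    using J by (auto simp: isolated_in_def nbrs_in_def)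
  moreover have "balance B W V = balance B W J + balance B W (V - J)"
    using fin JV by (rule balance_split)
  moreover have "balance B W (isolated_in E V) = balance B W J + balance B W (isolated_in E V - J)"
    using finite_subset[OF isolated_in_subset fin] J by (rule balance_split)
  moreover have "V - J \<subseteq> B \<union> W"
    using VS by blast
  ultimately show ?thesis
    using induced_score_unfold[OF bip VS] induced_score_unfold[OF bip, of "V - J"]
    by (simp add: isolated_in_Diff[OF J] core_Diff_isolated[OF J])
qed

lemma induced_score_Diff_white:
  assumes bip: "bipartite B W E" and VS: "V \<subseteq> B \<union> W" and I: "isolated_in E V = {}"
    and W0: "W0 \<subseteq> W"
  shows "induced_score B W E L (V - W0) + int (card (W0 \<inter> V))
    = int (card (V - core E (V - W0))) + induced_score B W E L (core E (V - W0))"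
proof -
  let ?D = "isolated_in E (V - W0)"
  have fin: "finite V"
    using finite_if_subset_vertices[OF bip VS] .
  have "induced_score B W E L (V - W0) = balance B W ?D + induced_score B W E L (core E (V - W0))"
    using induced_score_Diff_isolated[OF bip _ subset_refl, of "V - W0"] VS by (auto simp: core_def)
  moreover have "balance B W ?D = int (card ?D)"
    using isolated_in_Diff_white[OF assms] bip by (intro balance_black) (auto simp: bipartite_def)
  moreover have "V - core E (V - W0) = (W0 \<inter> V) \<union> ?D"
    using isolated_in_subset[of E "V - W0"] by (auto simp: core_def)
  moreover have "card ((W0 \<inter> V) \<union> ?D) = card (W0 \<inter> V) + card ?D"
    using fin isolated_in_subset[of E "V - W0"] by (intro card_Un_disjoint) (auto intro: finite_subset)
  ultimately show ?thesis
    by simp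
qed

lemma induced_score_no_isolated:
  assumes bip: "bipartite B W E" and VS: "V \<subseteq> B \<union> W" and I: "isolated_in E V = {}"
    and "V \<noteq> {}"
  shows "induced_score B W E True V = Max (move_value B W E True V ` (B \<inter> V))"
    and "induced_score B W E False V = Min (move_value B W E False V ` (W \<inter> V))"
proof -
  have "E \<inter> (V \<times> V) \<noteq> {}"
    using no_isolated_has_both_colours[OF assms] by blast
  moreover have "balance B W (isolated_in E V) = 0" and "core E V = V"
    by (simp_all add: I core_def balance_def)
  ultimately show "induced_score B W E True V = Max (move_value B W E True V ` (B \<inter> V))"
    and "induced_score B W E False V = Min (move_value B W E False V ` (W \<inter> V))"
    by (simp_all add: induced_score_unfold[OF bip VS])
qed

lemma Left_move_le:
  assumes "bipartite B W E" and "V \<subseteq> B \<union> W" and "isolated_in E V = {}" and "x \<in> B \<inter> V"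
  shows "move_value B W E True V x \<le> induced_score B W E True V"
proof -
  have "finite (B \<inter> V)" and "V \<noteq> {}"
    using finite_if_subset_vertices[OF assms(1,2)] assms(4) by auto
  then show ?thesis
    unfolding induced_score_no_isolated(1)[OF assms(1-3) \<open>V \<noteq> {}\<close>]
    using assms(4) by (intro Max_ge) auto
qed

lemma Left_optimal_move:
  assumes "bipartite B W E" and "V \<subseteq> B \<union> W" and "isolated_in E V = {}" and "V \<noteq> {}"
  obtains x where "x \<in> B \<inter> V" and "induced_score B W E True V = move_value B W E True V x"
proof -
  have "finite (B \<inter> V)" and "B \<inter> V \<noteq> {}"
    using finite_if_subset_vertices[OF assms(1,2)] no_isolated_has_both_colours[OF assms] by auto
  then have "Max (move_value B W E True V ` (B \<inter> V)) \<in> move_value B W E True V ` (B \<inter> V)"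
    by (intro Max_in) auto
  then show ?thesis
    using that unfolding induced_score_no_isolated(1)[OF assms] by blast
qed

lemma Right_move_ge:
  assumes "bipartite B W E" and "V \<subseteq> B \<union> W" and "isolated_in E V = {}" and "y \<in> W \<inter> V"
  shows "induced_score B W E False V \<le> move_value B W E False V y"
proof -
  have "finite (W \<inter> V)" and "V \<noteq> {}"
    using finite_if_subset_vertices[OF assms(1,2)] assms(4) by auto
  then show ?thesis
    unfolding induced_score_no_isolated(2)[OF assms(1-3) \<open>V \<noteq> {}\<close>]
    using assms(4) by (intro Min_le) auto
qed

lemma Right_optimal_move:
  assumes "bipartite B W E" and "V \<subseteq> B \<union> W" and "isolated_in E V = {}" and "V \<noteq> {}"
  obtains y where "y \<in> W \<inter> V" and "induced_score B W E False V = move_value B W E False V y"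
proof -
  have "finite (W \<inter> V)" and "W \<inter> V \<noteq> {}"
    using finite_if_subset_vertices[OF assms(1,2)] no_isolated_has_both_colours[OF assms] by auto
  then have "Min (move_value B W E False V ` (W \<inter> V)) \<in> move_value B W E False V ` (W \<inter> V)"
    by (intro Min_in) auto
  then show ?thesis
    using that unfolding induced_score_no_isolated(2)[OF assms] by blast
qed

lemma induced_score_le_card:
  assumes bip: "bipartite B W E" and "V \<subseteq> B \<union> W"
  shows "induced_score B W E L V \<le> int (card V)"
  using assms(2)
proof (induction "card V" arbitrary: V L rule: less_induct)
  case less
  have fin: "finite V"
    using finite_if_subset_vertices[OF bip less.prems] .
  define C where "C = core E V"
  have CV: "C \<subseteq> V" and CS: "C \<subseteq> B \<union> W" and IC: "isolated_in E C = {}"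
    using core_subset[of E V] less.prems by (auto simp: C_def isolated_in_core)
  have score_split: "induced_score B W E L V = balance B W (isolated_in E V) + induced_score B W E L C"
    using induced_score_Diff_isolated[OF bip less.prems subset_refl] by (simp add: C_def core_def)
  have card_split: "int (card V) = int (card (isolated_in E V)) + int (card C)"
    using fin isolated_in_subset[of E V] unfolding C_def core_def
    by (metis card_Diff_subset card_mono finite_subset le_add_diff_inverse of_nat_add)
  have move_le: "move_value B W E L' C x \<le> int (card C)" if "x \<in> C" for L' x
  proof -
    let ?A = "after_move E C x"
    have AC: "?A \<subseteq> C"
      using after_move_subset[of E C x] by blast
    have "card ?A < card V"
      using card_after_move_less[where E = E, OF finite_subset[OF CV fin] that] card_mono[OF fin CV] by linarith
    then have "induced_score B W E (\<not> L') ?A \<le> int (card ?A)"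
      using less.hyps AC CS by blast
    moreover have "int (card (C - ?A)) + int (card ?A) = int (card C)"
      using AC finite_subset[OF CV fin]
      by (metis card_Diff_subset card_mono finite_subset le_add_diff_inverse2 of_nat_add)
    ultimately show ?thesis
      by (auto simp: move_value_def)
  qed
  have "induced_score B W E L C \<le> int (card C)"
  proof (cases "C = {}")
    case True
    then show ?thesis
      by (simp add: induced_score_empty[OF bip])
  next
    case False
    show ?thesis
    proof (cases L)
      case True
      then show ?thesis
        using Left_optimal_move[OF bip CS IC False] move_le by (metis IntD2)
    next
      case False
      then show ?thesis
        using Right_optimal_move[OF bip CS IC \<open>C \<noteq> {}\<close>] move_le by (metis IntD2)
    qed
  qed
  then show ?case
    using score_split card_split balance_le_card[OF finite_subset[OF isolated_in_subset[of E V] fin], of B W] by linarith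
qed

section \<open>Exchanging the colours\<close>

lemma Max_uminus_image:
  fixes A :: "'a::linordered_ab_group_add set"
  assumes "finite A" and "A \<noteq> {}"
  shows "Max (uminus ` A) = - Min A"
  using assms by (intro Max_eqI) auto

lemma Min_uminus_image:
  fixes A :: "'a::linordered_ab_group_add set"
  assumes "finite A" and "A \<noteq> {}"
  shows "Min (uminus ` A) = - Max A"
  using assms by (intro Min_eqI) auto

lemma induced_score_converse:
  assumes bip: "bipartite B W E" and "V \<subseteq> B \<union> W"
  shows "induced_score W B (E\<inverse>) L V = - induced_score B W E (\<not> L) V"
  using assms(2)
proof (induction "card V" arbitrary: V L rule: less_induct)
  case less
  have fin: "finite V"
    using finite_if_subset_vertices[OF bip less.prems] .
  define C where "C = core E V"
  have CV: "C \<subseteq> V" and CS: "C \<subseteq> B \<union> W" and IC: "isolated_in E C = {}"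
    using core_subset[of E V] less.prems by (auto simp: C_def isolated_in_core)
  have moves: "move_value W B (E\<inverse>) L' C x = - move_value B W E (\<not> L') C x" if "x \<in> C" for L' x
  proof -
    let ?A = "after_move E C x"
    have "card ?A < card V"
      using card_after_move_less[where E = E, OF finite_subset[OF CV fin] that] card_mono[OF fin CV] by linarith
    moreover have "?A \<subseteq> B \<union> W"
      using after_move_subset[of E C x] CS by blast
    ultimately have "induced_score W B (E\<inverse>) (\<not> L') ?A = - induced_score B W E L' ?A"
      using less.hyps by fastforce
    then show ?thesis
      by (simp add: move_value_def)
  qed
  have "V \<subseteq> W \<union> B" and no_edges: "E\<inverse> \<inter> (V \<times> V) = {} \<longleftrightarrow> E \<inter> (V \<times> V) = {}"
    using less.prems by auto
  note unfold = induced_score_unfold[OF bip less.prems] induced_score_unfold[OF bipartite_converse[OF bip] this(1)]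
  show ?case
  proof (cases "E \<inter> (V \<times> V) = {}")
    case True
    then show ?thesis
      by (simp add: unfold no_edges balance_swap[of W B])
  next
    case False
    then have "C \<noteq> {}"
      unfolding C_def by (rule core_nonempty_if_edge)
    then have "B \<inter> C \<noteq> {}" and "W \<inter> C \<noteq> {}"
      using no_isolated_has_both_colours[OF bip CS IC] by auto
    moreover have "finite C"
      using finite_subset[OF CV fin] .
    moreover have negated: "move_value W B (E\<inverse>) L' C ` X = uminus ` move_value B W E (\<not> L') C ` X"
      if "X \<subseteq> C" for L' X
      unfolding image_image using that moves by (intro image_cong) auto
    ultimately have "Max (move_value W B (E\<inverse>) True C ` (W \<inter> C)) = - Min (move_value B W E False C ` (W \<inter> C))"
      and "Min (move_value W B (E\<inverse>) False C ` (B \<inter> C)) = - Max (move_value B W E True C ` (B \<inter> C))"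
      using negated[where L' = True and X = "W \<inter> C"] negated[where L' = False and X = "B \<inter> C"]
        Max_uminus_image[of "move_value B W E False C ` (W \<inter> C)"]
        Min_uminus_image[of "move_value B W E True C ` (B \<inter> C)"]
      by auto
    then show ?thesis
      using False by (cases L) (simp_all add: unfold no_edges balance_swap[of W B] flip: C_def)
  qed
qed

lemma black_deletion_of_converse:
  assumes bip: "bipartite B W E" and VS: "V \<subseteq> B \<union> W"
    and white_deletion: "induced_score W B (E\<inverse>) (\<not> L) V
      \<le> induced_score W B (E\<inverse>) (\<not> L) (V - B0) + int (card (B0 \<inter> V))"
  shows "induced_score B W E L (V - B0) - int (card (B0 \<inter> V)) \<le> induced_score B W E L V"
proof -
  have VS_B0: "V - B0 \<subseteq> B \<union> W"
    using VS by blast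
  show ?thesis
    using white_deletion induced_score_converse[OF bip VS, of "\<not> L"]
      induced_score_converse[OF bip VS_B0, of "\<not> L"] by simp
qed

section \<open>Deleting vertices of one colour\<close>

lemma Right_le_Left_if_black_deletion:
  assumes bip: "bipartite B W E" and VS: "V \<subseteq> B \<union> W" and I: "isolated_in E V = {}"
    and black_deletion: "\<And>B0. B0 \<subseteq> B \<inter> V \<Longrightarrow>
      induced_score B W E True (V - B0) - int (card B0) \<le> induced_score B W E True V"
  shows "induced_score B W E False V \<le> induced_score B W E True V"
proof (cases "V = {}")
  case True
  then show ?thesis
    by (simp add: induced_score_empty[OF bip])
next
  case False
  then obtain y where y: "y \<in> W \<inter> V"
    using no_isolated_has_both_colours[OF bip VS I] by blast
  define A where "A = after_move E V y"
  define R where "R = V - A"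
  have fin: "finite V"
    using finite_if_subset_vertices[OF bip VS] .
  have AV: "A \<subseteq> V"
    using after_move_subset[of E V y] by (auto simp: A_def)
  have "induced_score B W E False V \<le> - int (card R) + induced_score B W E True A"
    using Right_move_ge[OF bip VS I y] by (simp add: move_value_def A_def R_def)
  moreover have "induced_score B W E True (V - R \<inter> B) = - int (card (R \<inter> W)) + induced_score B W E True A"
  proof -
    have RW: "R \<inter> W \<subseteq> isolated_in E (V - R \<inter> B)"
      using white_removed_by_white_move_isolated[OF bip y] by (simp add: R_def A_def)
    have "V - R \<inter> B \<subseteq> B \<union> W"
      using VS by blast
    then have "induced_score B W E True (V - R \<inter> B)
        = balance B W (R \<inter> W) + induced_score B W E True (V - R \<inter> B - R \<inter> W)"
      using RW by (rule induced_score_Diff_isolated[OF bip])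
    moreover have "V - R \<inter> B - R \<inter> W = A"
      using AV VS by (auto simp: R_def)
    moreover have "balance B W (R \<inter> W) = - int (card (R \<inter> W))"
      using bip by (intro balance_white) (auto simp: bipartite_def)
    ultimately show ?thesis
      by simp
  qed
  moreover have "int (card R) = int (card (R \<inter> B)) + int (card (R \<inter> W))"
  proof -
    have "R = (R \<inter> B) \<union> (R \<inter> W)" and "(R \<inter> B) \<inter> (R \<inter> W) = {}"
      using VS bip by (auto simp: R_def bipartite_def)
    then show ?thesis
      using fin by (metis R_def card_Un_disjoint finite_Diff finite_Int of_nat_add)
  qed
  moreover have "induced_score B W E True (V - R \<inter> B) - int (card (R \<inter> B)) \<le> induced_score B W E True V"
    using black_deletion by (auto simp: R_def)
  ultimately show ?thesis
    by linarith
qed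

lemma white_deletion_Left_step:
  assumes bip: "bipartite B W E" and VS: "V \<subseteq> B \<union> W" and I: "isolated_in E V = {}"
    and W0: "W0 \<subseteq> W"
    and IH_Right: "\<And>U. U \<subseteq> V \<Longrightarrow> card U < card V \<Longrightarrow> isolated_in E U = {} \<Longrightarrow>
      induced_score B W E False U \<le> induced_score B W E False (U - W0) + int (card (W0 \<inter> U))"
    and IH_Right_le_Left: "\<And>U. U \<subseteq> V \<Longrightarrow> card U < card V \<Longrightarrow> isolated_in E U = {} \<Longrightarrow>
      induced_score B W E False U \<le> induced_score B W E True U"
  shows "induced_score B W E True V \<le> induced_score B W E True (V - W0) + int (card (W0 \<inter> V))"
proof (cases "V = {}")
  case True
  then show ?thesis
    by (simp add: induced_score_empty[OF bip])
next
  case False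
  define V2 where "V2 = core E (V - W0)"
  obtain x where x: "x \<in> B \<inter> V" and opt: "induced_score B W E True V = move_value B W E True V x"
    using Left_optimal_move[OF bip VS I False] .
  define A where "A = after_move E V x"
  define A2 where "A2 = core E (A - W0)"
  have fin: "finite V"
    using finite_if_subset_vertices[OF bip VS] .
  have AV: "A \<subseteq> V" and A2A: "A2 \<subseteq> A" and V2V: "V2 \<subseteq> V"
    using after_move_subset[of E V x] core_subset[of E "A - W0"] core_subset[of E "V - W0"]
    by (auto simp: A_def A2_def V2_def)
  have AS: "A \<subseteq> B \<union> W" and IA: "isolated_in E A = {}" and cA: "card A < card V"
    using AV VS x card_after_move_less[OF fin, of x E]
    by (auto simp: A_def isolated_in_after_move)
  have "induced_score B W E False A \<le> int (card (A - A2)) + induced_score B W E False A2"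
    using IH_Right[OF AV cA IA] induced_score_Diff_white[OF bip AS IA W0] by (simp add: A2_def)
  then have Ls_V: "induced_score B W E True V \<le> int (card (V - A)) + int (card (A - A2)) + induced_score B W E False A2"
    using opt by (simp add: move_value_def A_def)
  have "induced_score B W E True V \<le> int (card (V - V2)) + induced_score B W E True V2"
  proof (cases "x \<in> V2")
    case True
    have "after_move E V2 x = A2"
      using after_move_in_core_Diff[of x E V W0] True by (simp add: V2_def A_def A2_def)
    then have "int (card (V2 - A2)) + induced_score B W E False A2 \<le> induced_score B W E True V2"
      using Left_move_le[OF bip _ _, of V2 x] True x VS V2V by (auto simp: move_value_def V2_def isolated_in_core)
    moreover have "A2 \<subseteq> V2"
      using \<open>after_move E V2 x = A2\<close> after_move_subset[of E V2 x] by blast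
    ultimately show ?thesis
      using Ls_V card_Diff_add_card_Diff[OF fin A2A AV] card_Diff_add_card_Diff[OF fin _ V2V, of A2]
      by linarith
  next
    case False
    \<comment> \<open>x is already credited to Left in V - W0, and its move changes nothing there\<close>
    then have "x \<in> isolated_in E (V - W0)"
      using x W0 bip by (auto simp: V2_def core_def bipartite_def)
    then have A2_eq: "A2 = V2"
      using after_move_isolated_Diff[of x E V W0] x by (simp add: A_def A2_def V2_def)
    moreover have "card V2 < card V"
      using False x V2V fin by (intro psubset_card_mono) auto
    then have "induced_score B W E False V2 \<le> induced_score B W E True V2"
      using IH_Right_le_Left[OF V2V] by (simp add: V2_def isolated_in_core)
    ultimately show ?thesis
      using Ls_V card_Diff_add_card_Diff[OF fin A2A AV] unfolding A2_eq by linarith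
  qed
  then show ?thesis
    using induced_score_Diff_white[OF bip VS I W0, of True] by (simp add: V2_def)
qed

lemma white_deletion_Right_step:
  assumes bip: "bipartite B W E" and VS: "V \<subseteq> B \<union> W" and I: "isolated_in E V = {}"
    and W0: "W0 \<subseteq> W"
    and IH_Left: "\<And>U. U \<subseteq> V \<Longrightarrow> card U < card V \<Longrightarrow> isolated_in E U = {} \<Longrightarrow>
      induced_score B W E True U \<le> induced_score B W E True (U - W0) + int (card (W0 \<inter> U))"
  shows "induced_score B W E False V \<le> induced_score B W E False (V - W0) + int (card (W0 \<inter> V))"
proof -
  define V2 where "V2 = core E (V - W0)"
  have fin: "finite V"
    using finite_if_subset_vertices[OF bip VS] .
  have V2V: "V2 \<subseteq> V" and V2S: "V2 \<subseteq> B \<union> W" and I2: "isolated_in E V2 = {}"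
    using core_subset[of E "V - W0"] VS by (auto simp: V2_def isolated_in_core)
  have "induced_score B W E False V \<le> int (card (V - V2)) + induced_score B W E False V2"
  proof (cases "V2 = {}")
    case True
    then show ?thesis
      using induced_score_le_card[OF bip VS] by (simp add: induced_score_empty[OF bip])
  next
    case False
    obtain y where y: "y \<in> W \<inter> V2" and opt: "induced_score B W E False V2 = move_value B W E False V2 y"
      using Right_optimal_move[OF bip V2S I2 False] .
    define A where "A = after_move E V y"
    define A2 where "A2 = core E (A - W0)"
    have yV: "y \<in> W \<inter> V"
      using y V2V by blast
    have AV: "A \<subseteq> V" and A2A: "A2 \<subseteq> A"
      using after_move_subset[of E V y] core_subset[of E "A - W0"] by (auto simp: A_def A2_def)
    have AS: "A \<subseteq> B \<union> W" and IA: "isolated_in E A = {}" and cA: "card A < card V"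
      using AV VS yV card_after_move_less[OF fin, of y E]
      by (auto simp: A_def isolated_in_after_move)
    have A2_eq: "after_move E V2 y = A2"
      using after_move_in_core_Diff[of y E V W0] y by (simp add: V2_def A_def A2_def)
    then have A2V2: "A2 \<subseteq> V2"
      using after_move_subset[of E V2 y] by blast
    have "induced_score B W E False V \<le> - int (card (V - A)) + induced_score B W E True A"
      using Right_move_ge[OF bip VS I yV] by (simp add: move_value_def A_def)
    moreover have "induced_score B W E True A \<le> int (card (A - A2)) + induced_score B W E True A2"
      using IH_Left[OF AV cA IA] induced_score_Diff_white[OF bip AS IA W0] by (simp add: A2_def)
    moreover have "induced_score B W E False V2 = - int (card (V2 - A2)) + induced_score B W E True A2"
      using opt A2_eq by (simp add: move_value_def)
    moreover have "card (A - A2) \<le> card (V - V2)"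
      using Diff_core_after_white_move[OF bip VS W0 yV] fin
      by (intro card_mono) (auto simp: A_def A2_def V2_def)
    ultimately show ?thesis
      using card_Diff_add_card_Diff[OF fin A2A AV] card_Diff_add_card_Diff[OF fin A2V2 V2V]
      by linarith
  qed
  then show ?thesis
    using induced_score_Diff_white[OF bip VS I W0, of False] by (simp add: V2_def)
qed

lemma white_deletion_no_isolated:
  assumes "bipartite B W E" and "V \<subseteq> B \<union> W" and "isolated_in E V = {}" and "W0 \<subseteq> W"
  shows "induced_score B W E L V \<le> induced_score B W E L (V - W0) + int (card (W0 \<inter> V))"
  using assms
proof (induction "card V" arbitrary: B W E V W0 L rule: less_induct)
  case less
  note bip = less.prems(1) and VS = less.prems(2) and I = less.prems(3) and W0 = less.prems(4)
  have IH: "induced_score B W E L' U \<le> induced_score B W E L' (U - W0) + int (card (W0 \<inter> U))"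
    if "U \<subseteq> V" "card U < card V" "isolated_in E U = {}" for U L'
  proof -
    have "U \<subseteq> B \<union> W"
      using that(1) VS by blast
    then show ?thesis
      using less.hyps[OF that(2) bip _ that(3) W0] by simp
  qed
  have black_deletion: "induced_score B W E True (U - B0) - int (card B0) \<le> induced_score B W E True U"
    if U: "U \<subseteq> V" "card U < card V" "isolated_in E U = {}" and B0: "B0 \<subseteq> B \<inter> U" for U B0
  proof -
    have US: "U \<subseteq> B \<union> W" and US': "U \<subseteq> W \<union> B"
      using U(1) VS by blast+
    have IC: "isolated_in (E\<inverse>) U = {}" and "B0 \<subseteq> B" and B0U: "B0 \<inter> U = B0"
      using U(3) B0 by auto
    then have white: "induced_score W B (E\<inverse>) (\<not> True) U
        \<le> induced_score W B (E\<inverse>) (\<not> True) (U - B0) + int (card (B0 \<inter> U))"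
      using less.hyps[OF U(2) bipartite_converse[OF bip] US' IC \<open>B0 \<subseteq> B\<close>, where L = False] by simp
    then show ?thesis
      using black_deletion_of_converse[OF bip US white] B0U by simp
  qed
  show ?case
  proof (cases L)
    case True
    have Right_le_Left: "induced_score B W E False U \<le> induced_score B W E True U"
      if "U \<subseteq> V" "card U < card V" "isolated_in E U = {}" for U
    proof -
      have "U \<subseteq> B \<union> W"
        using that(1) VS by blast
      then show ?thesis
        by (rule Right_le_Left_if_black_deletion[OF bip _ that(3) black_deletion[OF that]])
    qed
    have "induced_score B W E True V \<le> induced_score B W E True (V - W0) + int (card (W0 \<inter> V))"
      by (rule white_deletion_Left_step[OF bip VS I W0]) (simp_all add: IH Right_le_Left)
    with True show ?thesis
      by simp
  next
    case False
    have "induced_score B W E False V \<le> induced_score B W E False (V - W0) + int (card (W0 \<inter> V))"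
      by (rule white_deletion_Right_step[OF bip VS I W0]) (simp add: IH)
    with False show ?thesis
      by simp
  qed
qed

lemma white_deletion:
  assumes bip: "bipartite B W E" and VS: "V \<subseteq> B \<union> W" and W0: "W0 \<subseteq> W"
  shows "induced_score B W E L V \<le> induced_score B W E L (V - W0) + int (card (W0 \<inter> V))"
proof -
  define J where "J = isolated_in E V"
  define C where "C = core E V"
  have fin: "finite V"
    using finite_if_subset_vertices[OF bip VS] .
  have CV: "C \<subseteq> V" and CS: "C \<subseteq> B \<union> W" and IC: "isolated_in E C = {}"
    using core_subset[of E V] VS by (auto simp: C_def isolated_in_core)
  have "induced_score B W E L V = balance B W J + induced_score B W E L C"
    using induced_score_Diff_isolated[OF bip VS, of J] by (simp add: J_def C_def core_def)
  moreover have "induced_score B W E L (V - W0) = balance B W (J - W0) + induced_score B W E L (C - W0)"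
  proof -
    have "J - W0 \<subseteq> isolated_in E (V - W0)"
      unfolding J_def by (rule isolated_in_Diff_mono)
    moreover have "V - W0 - (J - W0) = C - W0"
      by (auto simp: J_def C_def core_def)
    ultimately show ?thesis
      using induced_score_Diff_isolated[OF bip, of "V - W0" "J - W0"] VS by auto
  qed
  moreover have "balance B W J = balance B W (J - W0) + balance B W (J \<inter> W0)"
    using balance_split[OF finite_subset[OF _ fin], of J "J - W0"] isolated_in_subset[of E V]
    by (auto simp: J_def Diff_Diff_Int Int_commute)
  moreover have "balance B W (J \<inter> W0) \<le> 0"
  proof -
    have "J \<inter> W0 \<subseteq> W" and "B \<inter> W = {}"
      using W0 bip by (auto simp: bipartite_def)
    then show ?thesis
      by (simp add: balance_white)
  qed
  moreover have "card (W0 \<inter> C) \<le> card (W0 \<inter> V)"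
    using fin CV by (intro card_mono) auto
  ultimately show ?thesis
    using white_deletion_no_isolated[OF bip CS IC W0, of L] by linarith
qed

lemma black_deletion:
  assumes bip: "bipartite B W E" and VS: "V \<subseteq> B \<union> W" and B0: "B0 \<subseteq> B"
  shows "induced_score B W E L (V - B0) - int (card (B0 \<inter> V)) \<le> induced_score B W E L V"
proof -
  have "V \<subseteq> W \<union> B"
    using VS by blast
  then show ?thesis
    using black_deletion_of_converse[OF bip VS white_deletion[OF bipartite_converse[OF bip] _ B0]] by simp
qed

theorem mainTheorem7:
  fixes B W B0 W0 :: "'a set" and E :: "('a \<times> 'a) set"
  assumes "bipartite B W E" and "B0 \<subseteq> B" and "W0 \<subseteq> W"
  shows "(Ls B W E \<le> (case del B W E W0 of (B1, W1, E1) \<Rightarrow> Ls B1 W1 E1) + int (card W0)) \<and>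
         (Rs B W E \<ge> (case del B W E B0 of (B1, W1, E1) \<Rightarrow> Rs B1 W1 E1) - int (card B0)) \<and>
         (Ls B W E \<ge> (case del B W E B0 of (B1, W1, E1) \<Rightarrow> Ls B1 W1 E1) - int (card B0)) \<and>
         (Rs B W E \<le> (case del B W E W0 of (B1, W1, E1) \<Rightarrow> Rs B1 W1 E1) + int (card W0))"
proof -
  have "W0 \<inter> (B \<union> W) = W0" and "B0 \<inter> (B \<union> W) = B0"
    using assms(2,3) by auto
  then have "induced_score B W E L (B \<union> W) \<le> induced_score B W E L (B \<union> W - W0) + int (card W0)"
    and "induced_score B W E L (B \<union> W - B0) - int (card B0) \<le> induced_score B W E L (B \<union> W)" for L
    using white_deletion[OF assms(1) _ assms(3), of "B \<union> W" L]
      black_deletion[OF assms(1) _ assms(2), of "B \<union> W" L] by simp_all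
  then show ?thesis
    unfolding Ls_def Rs_def score_del[OF assms(1)] score_eq_induced_score[OF assms(1)] by simp
qed

end
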